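(* Let $s\ge1$ be an integer and let $(G,Z)$ be a dyadic plantation. Then there exists $X\subseteq Z$ with $|X|\le 2\phi(s)$ such that exploding the vertices of $X$ yields a dyadic plantation with at most $2|Z|$ binary vertices.
   Context: Graphs are finite and simple. Two subgraphs are anticomplete if their vertex sets are disjoint and no edge joins them. $G$ is $s\mathcal{O}$-free if no $s$ cycles of $G$ are pairwise vertex-disjoint and pairwise anticomplete. $Z\subseteq V(G)$ is cycle-hitting if every cycle of $G$ has a vertex in $Z$. A plantation is a pair $(G,Z)$ with $G$ an $s\mathcal{O}$-free graph and $Z$ cycle-hitting. $(G,Z)$ is dyadic if $Z$ is stable and every vertex of $V(G)\setminus Z$ has at most two neighbours in $Z$; a vertex of $V(G)\setminus Z$ is binary if it has exactly two neighbours in $Z$. Exploding $v\in Z$ produces $(G',Z\setminus\{v\})$, where $G'$ is obtained from $G$ by deleting $v$ and all its neighbours in $V(G)\setminus Z$; exploding a set means exploding its vertices one at a time. $\phi(s)\ge0$ denotes a number (which exists by the Erdős–Pósa theorem) such that every multigraph in which no $s$ cycles are pairwise vertex-disjoint has a set of at most $\phi(s)$ vertices meeting every cycle; in multigraphs, loops and pairs of parallel edges count as cycles. *)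

theory Defs
  imports Main
begin

definition graph :: "'a set \<Rightarrow> 'a set set \<Rightarrow> bool" where
  "graph V E \<longleftrightarrow> finite V \<and> (\<forall>e\<in>E. \<exists>u v. u \<noteq> v \<and> u \<in> V \<and> v \<in> V \<and> e = {u, v})"

definition nbrs :: "'a set set \<Rightarrow> 'a \<Rightarrow> 'a set" where
  "nbrs E v = {u. {u, v} \<in> E}"

definition is_cycle :: "'a set \<Rightarrow> 'a set set \<Rightarrow> 'a list \<Rightarrow> bool" where
  "is_cycle V E vs \<longleftrightarrow> length vs \<ge> 3 \<and> distinct vs \<and> set vs \<subseteq> V \<and>
     (\<forall>i < length vs. {vs ! i, vs ! ((i + 1) mod length vs)} \<in> E)"

definition anticomplete :: "'a set set \<Rightarrow> 'a set \<Rightarrow> 'a set \<Rightarrow> bool" where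
  "anticomplete E A B \<longleftrightarrow> A \<inter> B = {} \<and> (\<forall>u\<in>A. \<forall>v\<in>B. {u, v} \<notin> E)"

definition sO_free :: "nat \<Rightarrow> 'a set \<Rightarrow> 'a set set \<Rightarrow> bool" where
  "sO_free s V E \<longleftrightarrow> \<not> (\<exists>cs. length cs = s \<and> (\<forall>i < s. is_cycle V E (cs ! i)) \<and>
     (\<forall>i < s. \<forall>j < s. i \<noteq> j \<longrightarrow> anticomplete E (set (cs ! i)) (set (cs ! j))))"

definition cycle_hitting :: "'a set \<Rightarrow> 'a set set \<Rightarrow> 'a set \<Rightarrow> bool" where
  "cycle_hitting V E Z \<longleftrightarrow> Z \<subseteq> V \<and> (\<forall>vs. is_cycle V E vs \<longrightarrow> set vs \<inter> Z \<noteq> {})"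

definition plantation :: "nat \<Rightarrow> 'a set \<Rightarrow> 'a set set \<Rightarrow> 'a set \<Rightarrow> bool" where
  "plantation s V E Z \<longleftrightarrow> graph V E \<and> sO_free s V E \<and> cycle_hitting V E Z"

definition stable :: "'a set set \<Rightarrow> 'a set \<Rightarrow> bool" where
  "stable E Z \<longleftrightarrow> (\<forall>u\<in>Z. \<forall>v\<in>Z. {u, v} \<notin> E)"

definition dyadic :: "nat \<Rightarrow> 'a set \<Rightarrow> 'a set set \<Rightarrow> 'a set \<Rightarrow> bool" where
  "dyadic s V E Z \<longleftrightarrow> plantation s V E Z \<and> stable E Z \<and>
     (\<forall>v \<in> V - Z. card (nbrs E v \<inter> Z) \<le> 2)"

definition binary_vertices :: "'a set \<Rightarrow> 'a set set \<Rightarrow> 'a set \<Rightarrow> 'a set" where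
  "binary_vertices V E Z = {v \<in> V - Z. card (nbrs E v \<inter> Z) = 2}"

definition del_vertices :: "'a set \<times> 'a set set \<Rightarrow> 'a set \<Rightarrow> 'a set \<times> 'a set set" where
  "del_vertices G D = (fst G - D, {e \<in> snd G. e \<inter> D = {}})"

definition explode :: "'a \<Rightarrow> ('a set \<times> 'a set set) \<times> 'a set \<Rightarrow> ('a set \<times> 'a set set) \<times> 'a set" where
  "explode v GZ = (let (G, Z) = GZ in
     (del_vertices G ({v} \<union> (nbrs (snd G) v \<inter> (fst G - Z))), Z - {v}))"

definition explode_list :: "'a list \<Rightarrow> ('a set \<times> 'a set set) \<times> 'a set \<Rightarrow> ('a set \<times> 'a set set) \<times> 'a set" where
  "explode_list xs GZ = foldl (\<lambda>acc v. explode v acc) GZ xs"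

text \<open>A finite multigraph with vertex set MV and edge set ME (edge names), where
ends e is the set of endpoints of e (one endpoint for a loop, two otherwise).
Vertices and edges are labelled by naturals, which is no loss of generality for
finite multigraphs.\<close>

definition multigraph :: "nat set \<Rightarrow> nat set \<Rightarrow> (nat \<Rightarrow> nat set) \<Rightarrow> bool" where
  "multigraph MV ME ends \<longleftrightarrow> finite MV \<and> finite ME \<and>
     (\<forall>e\<in>ME. ends e \<subseteq> MV \<and> 1 \<le> card (ends e) \<and> card (ends e) \<le> 2)"

text \<open>For k = 1 this is a
loop, for k = 2 a pair of parallel edges.\<close>

definition mcycle :: "nat set \<Rightarrow> nat set \<Rightarrow> (nat \<Rightarrow> nat set) \<Rightarrow> nat list \<Rightarrow> bool" where
  "mcycle MV ME ends vs \<longleftrightarrow> (\<exists>es. length vs \<ge> 1 \<and> length es = length vs \<and>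
     distinct vs \<and> distinct es \<and> set vs \<subseteq> MV \<and> set es \<subseteq> ME \<and>
     (\<forall>i < length vs. ends (es ! i) = {vs ! i, vs ! ((i + 1) mod length vs)}))"

definition EP_bound :: "nat \<Rightarrow> nat \<Rightarrow> bool" where
  "EP_bound s phi \<longleftrightarrow> (\<forall>MV ME ends. multigraph MV ME ends \<longrightarrow>
     \<not> (\<exists>cs. length cs = s \<and> (\<forall>i < s. mcycle MV ME ends (cs ! i)) \<and>
          (\<forall>i < s. \<forall>j < s. i \<noteq> j \<longrightarrow> set (cs ! i) \<inter> set (cs ! j) = {})) \<longrightarrow>
     (\<exists>H \<subseteq> MV. card H \<le> phi \<and> (\<forall>vs. mcycle MV ME ends vs \<longrightarrow> set vs \<inter> H \<noteq> {})))"

end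

(*
  The binary vertices avoid the cycle-hitting set Z, so they induce a forest and
  split into two stable sets B1 and B2.  For a stable set Bi of binary vertices let
  Hi be the multigraph on Z in which every b in Bi is an edge joining its two
  neighbours in Z.  Inserting the edge-vertices lifts a cycle of Hi to a cycle of G,
  and since Z and Bi are stable, vertex-disjoint cycles of Hi lift to pairwise
  anticomplete cycles of G.  Hence Hi has no s disjoint cycles, and the Erdos-Posa
  bound yields a set Xi of at most phi vertices meeting all cycles of Hi.  Exploding
  X1 and X2 keeps the plantation dyadic, and every binary vertex that survives is an
  edge of the forest Hi - Xi for some i, which has at most |Z| edges.
*)

theory Submission
  imports Defs
begin

definition mcycle_with_edges :: "'v set \<Rightarrow> 'e set \<Rightarrow> ('e \<Rightarrow> 'v set) \<Rightarrow> 'v list \<Rightarrow> 'e list \<Rightarrow> bool" where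
  "mcycle_with_edges MV ME ends vs es \<longleftrightarrow> length vs \<ge> 1 \<and> length es = length vs \<and>
     distinct vs \<and> distinct es \<and> set vs \<subseteq> MV \<and> set es \<subseteq> ME \<and>
     (\<forall>i < length vs. ends (es ! i) = {vs ! i, vs ! ((i + 1) mod length vs)})"

definition mpath_with_edges :: "'v set \<Rightarrow> 'e set \<Rightarrow> ('e \<Rightarrow> 'v set) \<Rightarrow> 'v list \<Rightarrow> 'e list \<Rightarrow> bool" where
  "mpath_with_edges MV ME ends vs es \<longleftrightarrow> length vs = length es + 1 \<and>
     distinct vs \<and> distinct es \<and> set vs \<subseteq> MV \<and> set es \<subseteq> ME \<and>
     (\<forall>i < length es. ends (es ! i) = {vs ! i, vs ! Suc i})"

definition macyclic :: "'v set \<Rightarrow> 'e set \<Rightarrow> ('e \<Rightarrow> 'v set) \<Rightarrow> bool" where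
  "macyclic MV ME ends \<longleftrightarrow> (\<forall>vs es. \<not> mcycle_with_edges MV ME ends vs es)"

definition has_disjoint_mcycles :: "nat \<Rightarrow> 'v set \<Rightarrow> 'e set \<Rightarrow> ('e \<Rightarrow> 'v set) \<Rightarrow> bool" where
  "has_disjoint_mcycles s MV ME ends \<longleftrightarrow> (\<exists>cs. length cs = s \<and>
     (\<forall>i < s. \<exists>es. mcycle_with_edges MV ME ends (cs ! i) es) \<and>
     (\<forall>i < s. \<forall>j < s. i \<noteq> j \<longrightarrow> set (cs ! i) \<inter> set (cs ! j) = {}))"

lemma mcycle_iff_mcycle_with_edges: "mcycle MV ME ends vs \<longleftrightarrow> (\<exists>es. mcycle_with_edges MV ME ends vs es)"
  by (simp add: mcycle_def mcycle_with_edges_def)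

lemma mcycle_with_edges_mono:
  "mcycle_with_edges MV ME ends vs es \<Longrightarrow> MV \<subseteq> MV' \<Longrightarrow> ME \<subseteq> ME' \<Longrightarrow>
   mcycle_with_edges MV' ME' ends vs es"
  unfolding mcycle_with_edges_def by blast

lemma macyclic_mono: "macyclic MV' ME' ends \<Longrightarrow> MV \<subseteq> MV' \<Longrightarrow> ME \<subseteq> ME' \<Longrightarrow> macyclic MV ME ends"
  unfolding macyclic_def using mcycle_with_edges_mono by blast

lemma mcycle_with_edges_ends_subset:
  assumes "mcycle_with_edges MV ME ends vs es" "e \<in> set es"
  shows "ends e \<subseteq> set vs"
proof -
  obtain i where i: "i < length es" "e = es ! i" using assms(2) by (metis in_set_conv_nth)
  have "length vs \<ge> 1" "length es = length vs" using assms(1) unfolding mcycle_with_edges_def by auto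
  then have "(i + 1) mod length vs < length vs" by (intro mod_less_divisor) linarith
  then show ?thesis using assms(1) i unfolding mcycle_with_edges_def by auto
qed

lemma mcycle_with_edges_map:
  assumes f: "inj_on f MV" and g: "inj_on g ME" and ends': "\<forall>e\<in>ME. ends' (g e) = f ` ends e"
    and c: "mcycle_with_edges MV ME ends vs es"
  shows "mcycle_with_edges (f ` MV) (g ` ME) ends' (map f vs) (map g es)"
proof -
  have l: "length vs \<ge> 1" "length es = length vs" "set vs \<subseteq> MV" "set es \<subseteq> ME"
    and ee: "\<forall>i < length vs. ends (es ! i) = {vs ! i, vs ! ((i + 1) mod length vs)}"
    using c unfolding mcycle_with_edges_def by auto
  have "distinct (map f vs)" "distinct (map g es)"
    using c l inj_on_subset[OF f l(3)] inj_on_subset[OF g l(4)]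
    unfolding mcycle_with_edges_def by (auto simp: distinct_map)
  moreover have "ends' (map g es ! i) = {map f vs ! i, map f vs ! ((i + 1) mod length vs)}"
    if i: "i < length vs" for i
  proof -
    have "(i + 1) mod length vs < length vs" using l by (intro mod_less_divisor) linarith
    moreover have "es ! i \<in> ME" using i l by auto
    ultimately show ?thesis using ends' ee i l by simp
  qed
  ultimately show ?thesis using l unfolding mcycle_with_edges_def by auto
qed

lemma has_disjoint_mcycles_image:
  assumes f: "inj_on f MV" and g: "inj_on g ME" and ends': "\<forall>e\<in>ME. ends' (g e) = f ` ends e"
    and "has_disjoint_mcycles s MV ME ends"
  shows "has_disjoint_mcycles s (f ` MV) (g ` ME) ends'"
proof -
  obtain cs where l: "length cs = s" and cyc: "\<forall>i < s. \<exists>es. mcycle_with_edges MV ME ends (cs ! i) es"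
    and dj: "\<forall>i < s. \<forall>j < s. i \<noteq> j \<longrightarrow> set (cs ! i) \<inter> set (cs ! j) = {}"
    using assms(4) unfolding has_disjoint_mcycles_def by blast
  have "\<exists>es. mcycle_with_edges (f ` MV) (g ` ME) ends' (map (map f) cs ! i) es" if "i < s" for i
    using cyc mcycle_with_edges_map[OF f g ends'] that l by fastforce
  moreover have "set (map (map f) cs ! i) \<inter> set (map (map f) cs ! j) = {}"
    if ij: "i < s" "j < s" "i \<noteq> j" for i j
  proof -
    have "set (cs ! i) \<subseteq> MV" "set (cs ! j) \<subseteq> MV"
      using cyc ij unfolding mcycle_with_edges_def by blast+
    then have "f ` set (cs ! i) \<inter> f ` set (cs ! j) = f ` (set (cs ! i) \<inter> set (cs ! j))"
      using inj_on_image_Int[OF f] by blast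
    then show ?thesis using dj ij l by simp
  qed
  ultimately show ?thesis unfolding has_disjoint_mcycles_def using l by (intro exI[of _ "map (map f) cs"]) auto
qed

lemma mpath_with_edges_length_bound:
  assumes "finite MV" "mpath_with_edges MV ME ends vs es"
  shows "length es < card MV"
proof -
  have "length vs = card (set vs)" using assms(2) distinct_card unfolding mpath_with_edges_def by metis
  also have "\<dots> \<le> card MV" using assms card_mono unfolding mpath_with_edges_def by metis
  finally show ?thesis using assms(2) unfolding mpath_with_edges_def by simp
qed

lemma mpath_with_edges_Cons:
  assumes p: "mpath_with_edges MV ME ends vs es" and f: "f \<in> ME" "f \<notin> set es"
    and w: "w \<in> MV" "w \<notin> set vs" and fw: "ends f = {w, vs ! 0}"
  shows "mpath_with_edges MV ME ends (w # vs) (f # es)"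
proof -
  have "ends ((f # es) ! i) = {(w # vs) ! i, (w # vs) ! Suc i}" if "i < length (f # es)" for i
    using that fw p unfolding mpath_with_edges_def by (cases i) auto
  then show ?thesis using p f w unfolding mpath_with_edges_def by auto
qed

lemma mcycle_with_edges_close_path:
  assumes p: "mpath_with_edges MV ME ends vs es" and j: "0 < j" "j < length vs"
    and f: "f \<in> ME" "f \<notin> set (take j es)" and fw: "ends f = {vs ! j, vs ! 0}"
  shows "mcycle_with_edges MV ME ends (take (j + 1) vs) (take j es @ [f])"
proof -
  have lv: "length vs = length es + 1" and ee: "\<forall>i < length es. ends (es ! i) = {vs ! i, vs ! Suc i}"
    using p unfolding mpath_with_edges_def by auto
  have len: "length (take (j + 1) vs) = j + 1" "length (take j es @ [f]) = j + 1" using j lv by auto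
  have "ends ((take j es @ [f]) ! i) = {take (j + 1) vs ! i, take (j + 1) vs ! ((i + 1) mod (j + 1))}"
    if "i < j + 1" for i
  proof (cases "i < j")
    case True
    then show ?thesis using ee j lv by (auto simp: nth_append)
  next
    case False
    then have "i = j" using that by simp
    then show ?thesis using fw j lv by (simp add: nth_append)
  qed
  moreover have "distinct (take j es @ [f])" "set (take j es @ [f]) \<subseteq> ME"
    using p f unfolding mpath_with_edges_def by (auto dest: in_set_takeD)
  moreover have "distinct (take (j + 1) vs)" "set (take (j + 1) vs) \<subseteq> MV"
    using p unfolding mpath_with_edges_def by (auto dest: in_set_takeD)
  ultimately show ?thesis unfolding mcycle_with_edges_def len by simp
qed

lemma mpath_with_edges_longest:
  assumes "finite MV" "mpath_with_edges MV ME ends vs0 es0"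
  obtains vs es where "mpath_with_edges MV ME ends vs es"
    "\<And>vs' es'. mpath_with_edges MV ME ends vs' es' \<Longrightarrow> length es' \<le> length es"
proof -
  let ?P = "\<lambda>p. mpath_with_edges MV ME ends (fst p) (snd p)"
  have "\<forall>p. ?P p \<longrightarrow> length (snd p) < card MV"
    using mpath_with_edges_length_bound[OF assms(1)] by blast
  then obtain p where "?P p" "\<forall>q. ?P q \<longrightarrow> length (snd q) \<le> length (snd p)"
    using ex_has_greatest_nat[of ?P "(vs0, es0)" "\<lambda>p. length (snd p)" "card MV"] assms(2) by auto
  then show ?thesis using that[of "fst p" "snd p"] by auto
qed

lemma mpath_with_edges_edge_at_start:
  assumes p: "mpath_with_edges MV ME ends vs es" and f: "f \<in> set es" "vs ! 0 \<in> ends f"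
  shows "f = es ! 0"
proof -
  have lv: "length vs = length es + 1" and dv: "distinct vs"
    and ee: "\<forall>i < length es. ends (es ! i) = {vs ! i, vs ! Suc i}"
    using p unfolding mpath_with_edges_def by auto
  obtain i where i: "i < length es" "f = es ! i" using f(1) by (metis in_set_conv_nth)
  have "vs ! Suc i \<noteq> vs ! 0" using i lv nth_eq_iff_index_eq[OF dv, of "Suc i" 0] by simp
  then have "vs ! i = vs ! 0" using ee f(2) i by auto
  then have "i = 0" using i lv nth_eq_iff_index_eq[OF dv, of i 0] by simp
  then show ?thesis using i by simp
qed

lemma macyclic_has_leaf:
  assumes fin: "finite MV" and E2: "\<forall>e\<in>ME. ends e \<subseteq> MV \<and> card (ends e) = 2"
    and ac: "macyclic MV ME ends" and ne: "MV \<noteq> {}"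
  shows "\<exists>v\<in>MV. \<forall>e\<in>ME. \<forall>e'\<in>ME. v \<in> ends e \<longrightarrow> v \<in> ends e' \<longrightarrow> e = e'"
proof (cases "ME = {}")
  case True
  then show ?thesis using ne by auto
next
  case False
  then obtain e where e: "e \<in> ME" by blast
  then obtain a b where ab: "ends e = {a, b}" "a \<noteq> b" using E2 card_2_iff by metis
  moreover have "{a, b} \<subseteq> MV" using E2 e ab by auto
  ultimately have "mpath_with_edges MV ME ends [a, b] [e]"
    using e unfolding mpath_with_edges_def by (simp add: less_Suc_eq)
  then obtain vs es where p: "mpath_with_edges MV ME ends vs es"
    and longest: "\<And>vs' es'. mpath_with_edges MV ME ends vs' es' \<Longrightarrow> length es' \<le> length es"
    using mpath_with_edges_longest[OF fin] by metis
  have lv: "length vs = length es + 1" using p unfolding mpath_with_edges_def by auto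
  have "f = es ! 0" if f: "f \<in> ME" "vs ! 0 \<in> ends f" for f
  proof (rule ccontr)
    assume f0: "f \<noteq> es ! 0"
    then have "f \<notin> set es" using mpath_with_edges_edge_at_start[OF p _ f(2)] by blast
    have "card (ends f - {vs ! 0}) = 1" using E2 f by simp
    then obtain w where "ends f - {vs ! 0} = {w}" by (rule card_1_singletonE)
    then have w: "ends f = {w, vs ! 0}" "w \<noteq> vs ! 0" "w \<in> MV" using E2 f by auto
    show False
    proof (cases "w \<in> set vs")
      case False
      have "mpath_with_edges MV ME ends (w # vs) (f # es)"
        using mpath_with_edges_Cons[OF p f(1) \<open>f \<notin> set es\<close> w(3) False w(1)] .
      then show False using longest by fastforce
    next
      case True
      then obtain j where j: "j < length vs" "w = vs ! j" by (metis in_set_conv_nth)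
      moreover have "j \<noteq> 0" using w j by (cases j) auto
      moreover have "f \<notin> set (take j es)" using \<open>f \<notin> set es\<close> in_set_takeD by metis
      ultimately have "mcycle_with_edges MV ME ends (take (j + 1) vs) (take j es @ [f])"
        using mcycle_with_edges_close_path[OF p _ j(1) f(1)] w(1) by blast
      then show False using ac unfolding macyclic_def by blast
    qed
  qed
  moreover have "vs ! 0 \<in> MV" using p lv unfolding mpath_with_edges_def by auto
  ultimately show ?thesis by blast
qed

lemma card_le_Suc_card_edges_avoiding_leaf:
  assumes fin: "finite ME" and leaf: "\<forall>e\<in>ME. \<forall>e'\<in>ME. v \<in> ends e \<longrightarrow> v \<in> ends e' \<longrightarrow> e = e'"
  shows "card ME \<le> card {e \<in> ME. v \<notin> ends e} + 1"
proof (cases "\<exists>e\<in>ME. v \<in> ends e")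
  case True
  then obtain e where e: "e \<in> ME" "v \<in> ends e" by blast
  have "ME \<subseteq> insert e {e \<in> ME. v \<notin> ends e}"
  proof
    fix e' assume "e' \<in> ME"
    then show "e' \<in> insert e {e \<in> ME. v \<notin> ends e}" using leaf e by blast
  qed
  then have "card ME \<le> card (insert e {e \<in> ME. v \<notin> ends e})" using fin by (intro card_mono) auto
  also have "\<dots> \<le> card {e \<in> ME. v \<notin> ends e} + 1" by (simp add: card_insert_if fin)
  finally show ?thesis .
next
  case False
  then have "{e \<in> ME. v \<notin> ends e} = ME" by auto
  then show ?thesis by simp
qed

lemma macyclic_card_edges_le:
  assumes "finite MV" "finite ME" "\<forall>e\<in>ME. ends e \<subseteq> MV \<and> card (ends e) = 2" "macyclic MV ME ends"
  shows "card ME \<le> card MV"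
  using assms
proof (induction MV arbitrary: ME rule: finite_remove_induct)
  case empty
  have "ME = {}"
  proof (rule ccontr)
    assume "ME \<noteq> {}"
    then obtain e where "e \<in> ME" by blast
    then have "ends e = {}" "card (ends e) = 2" using empty.prems(2) by auto
    then show False by simp
  qed
  then show ?case by simp
next
  case (remove A ME)
  obtain v where v: "v \<in> A" and leaf: "\<forall>e\<in>ME. \<forall>e'\<in>ME. v \<in> ends e \<longrightarrow> v \<in> ends e' \<longrightarrow> e = e'"
    using macyclic_has_leaf[OF remove.hyps(1) remove.prems(2,3) remove.hyps(2)] by blast
  define ME' where "ME' = {e \<in> ME. v \<notin> ends e}"
  have fin': "finite ME'" using remove.prems(1) unfolding ME'_def by simp
  have "\<forall>e\<in>ME'. ends e \<subseteq> A - {v} \<and> card (ends e) = 2"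
    using remove.prems(2) unfolding ME'_def by blast
  moreover have "macyclic (A - {v}) ME' ends"
    by (rule macyclic_mono[OF remove.prems(3)]) (auto simp: ME'_def)
  ultimately have "card ME' \<le> card (A - {v})" using remove.IH[OF v fin'] by blast
  moreover have "card ME \<le> card ME' + 1"
    unfolding ME'_def using card_le_Suc_card_edges_avoiding_leaf[OF remove.prems(1) leaf] .
  moreover have "card A = Suc (card (A - {v}))" using remove.hyps(1) v by (rule card.remove)
  ultimately show ?case by linarith
qed

lemma graph_singleton_notin: "graph V E \<Longrightarrow> {v} \<notin> E"
  unfolding graph_def by (auto simp: singleton_insert_inj_eq)

lemma graph_edge_card: "graph V E \<Longrightarrow> e \<in> E \<Longrightarrow> card e = 2"
  unfolding graph_def by auto

lemma mcycle_with_edges_is_cycle: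
  assumes g: "graph V E" and c: "mcycle_with_edges V E id vs es"
  shows "is_cycle V E vs"
proof -
  have l: "length vs \<ge> 1" "length es = length vs" "distinct es" "set es \<subseteq> E"
    and ee: "\<forall>i < length vs. es ! i = {vs ! i, vs ! ((i + 1) mod length vs)}"
    using c unfolding mcycle_with_edges_def by auto
  have "length vs \<noteq> 1"
  proof
    assume "length vs = 1"
    then have "es ! 0 = {vs ! 0}" using ee l by auto
    moreover have "es ! 0 \<in> E" using l \<open>length vs = 1\<close> nth_mem[of 0 es] by auto
    ultimately have "{vs ! 0} \<in> E" by simp
    then show False using graph_singleton_notin[OF g] by blast
  qed
  moreover have "length vs \<noteq> 2"
  proof
    assume two: "length vs = 2"
    then have "es ! 0 = es ! 1" using ee by (simp add: insert_commute)
    then show False using l two nth_eq_iff_index_eq[of es 0 1] by auto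
  qed
  moreover have "es ! i \<in> E" if "i < length vs" for i using l that by auto
  ultimately show ?thesis using c ee l unfolding is_cycle_def mcycle_with_edges_def by auto
qed

lemma stable_insert: "stable E (insert v S) \<longleftrightarrow> {v} \<notin> E \<and> stable E S \<and> (\<forall>u\<in>S. {u, v} \<notin> E)"
proof
  assume st: "stable E (insert v S)"
  then have "{v, v} \<notin> E" unfolding stable_def by blast
  then show "{v} \<notin> E \<and> stable E S \<and> (\<forall>u\<in>S. {u, v} \<notin> E)" using st unfolding stable_def by simp
next
  assume h: "{v} \<notin> E \<and> stable E S \<and> (\<forall>u\<in>S. {u, v} \<notin> E)"
  show "stable E (insert v S)"
    unfolding stable_def
  proof (intro ballI)
    fix x y assume "x \<in> insert v S" "y \<in> insert v S"
    then show "{x, y} \<notin> E" using h unfolding stable_def by (cases "x = v"; cases "y = v") (auto simp: insert_commute)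
  qed
qed

lemma macyclic_induced_edges:
  assumes g: "graph V E" and AV: "A \<subseteq> V" and nc: "\<forall>vs. is_cycle V E vs \<longrightarrow> \<not> set vs \<subseteq> A"
  shows "macyclic A {e \<in> E. e \<subseteq> A} id"
  unfolding macyclic_def
proof (intro allI notI)
  fix vs es assume c: "mcycle_with_edges A {e \<in> E. e \<subseteq> A} id vs es"
  have "mcycle_with_edges V E id vs es" by (rule mcycle_with_edges_mono[OF c]) (use AV in auto)
  then have "is_cycle V E vs" by (rule mcycle_with_edges_is_cycle[OF g])
  moreover have "set vs \<subseteq> A" using c unfolding mcycle_with_edges_def by auto
  ultimately show False using nc by blast
qed

lemma acyclic_set_splits_into_two_stable:
  assumes g: "graph V E" and SV: "S \<subseteq> V" and nc: "\<forall>vs. is_cycle V E vs \<longrightarrow> \<not> set vs \<subseteq> S"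
  shows "\<exists>S1\<subseteq>S. stable E S1 \<and> stable E (S - S1)"
proof -
  have "finite S" using g SV finite_subset unfolding graph_def by blast
  then show ?thesis
  proof (induction S rule: finite_remove_induct)
    case empty
    then show ?case by (auto simp: stable_def)
  next
    case (remove A)
    let ?EA = "{e \<in> E. e \<subseteq> A}"
    have "A \<subseteq> V" using remove.hyps(3) SV by (rule subset_trans)
    moreover have "\<forall>vs. is_cycle V E vs \<longrightarrow> \<not> set vs \<subseteq> A" using remove.hyps(3) nc by (meson subset_trans)
    ultimately have ac: "macyclic A ?EA id" by (rule macyclic_induced_edges[OF g])
    have "\<forall>e\<in>?EA. id e \<subseteq> A \<and> card (id e) = 2" using graph_edge_card[OF g] by auto
    then obtain v where v: "v \<in> A" and leaf: "\<forall>e\<in>?EA. \<forall>e'\<in>?EA. v \<in> e \<longrightarrow> v \<in> e' \<longrightarrow> e = e'"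
      using macyclic_has_leaf[OF remove.hyps(1) _ ac remove.hyps(2)] by auto
    obtain S1 where S1: "S1 \<subseteq> A - {v}" "stable E S1" "stable E (A - {v} - S1)"
      using remove.IH[OF v] by blast
    have unique_nbr: "a = b" if "a \<in> A" "b \<in> A" "{a, v} \<in> E" "{b, v} \<in> E" for a b
    proof -
      have "{a, v} \<subseteq> A" "{b, v} \<subseteq> A" using that v by auto
      then have "{a, v} = {b, v}" using that by (intro leaf[rule_format]) auto
      then show ?thesis by (auto simp: doubleton_eq_iff)
    qed
    have "{v} \<notin> E" using graph_singleton_notin[OF g] .
    show ?case
    proof (cases "\<exists>a\<in>S1. {a, v} \<in> E")
      case True
      then have "stable E (insert v (A - {v} - S1))"
        using S1 unique_nbr \<open>{v} \<notin> E\<close> by (auto simp: stable_insert)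
      moreover have "insert v (A - {v} - S1) = A - S1" using S1(1) v by auto
      ultimately show ?thesis using S1 by auto
    next
      case False
      then have "stable E (insert v S1)" using S1 \<open>{v} \<notin> E\<close> by (auto simp: stable_insert)
      moreover have "A - insert v S1 = A - {v} - S1" by auto
      ultimately show ?thesis using S1 v by (intro exI[of _ "insert v S1"]) auto
    qed
  qed
qed

lemma has_disjoint_mcycles_iff:
  "has_disjoint_mcycles s MV ME ends \<longleftrightarrow> (\<exists>cs. length cs = s \<and> (\<forall>i < s. mcycle MV ME ends (cs ! i)) \<and>
     (\<forall>i < s. \<forall>j < s. i \<noteq> j \<longrightarrow> set (cs ! i) \<inter> set (cs ! j) = {}))"
  by (simp add: has_disjoint_mcycles_def mcycle_iff_mcycle_with_edges)

lemma has_disjoint_mcycles_preimage: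
  assumes f: "inj_on f MV" and g: "inj_on g ME" and ends: "\<forall>e\<in>ME. ends e \<subseteq> MV"
    and ends': "\<forall>e\<in>ME. ends' (g e) = f ` ends e"
    and "has_disjoint_mcycles s (f ` MV) (g ` ME) ends'"
  shows "has_disjoint_mcycles s MV ME ends"
proof -
  have "\<forall>k\<in>g ` ME. ends (inv_into ME g k) = inv_into MV f ` ends' k"
  proof
    fix k assume "k \<in> g ` ME"
    then obtain e where e: "e \<in> ME" "k = g e" by blast
    then have "inv_into MV f ` ends' k = ends e" using ends ends' f by simp
    then show "ends (inv_into ME g k) = inv_into MV f ` ends' k" using e g by simp
  qed
  then have "has_disjoint_mcycles s (inv_into MV f ` f ` MV) (inv_into ME g ` g ` ME) ends"
    using has_disjoint_mcycles_image[of "inv_into MV f" "f ` MV" "inv_into ME g" "g ` ME" ends] assms(5)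
      inj_on_inv_into[of "f ` MV" f MV] inj_on_inv_into[of "g ` ME" g ME] by blast
  then show ?thesis using f g by simp
qed

lemma mcycle_hitting_set_preimage:
  assumes f: "inj_on f MV" and g: "inj_on g ME" and ends': "\<forall>e\<in>ME. ends' (g e) = f ` ends e"
    and hit: "\<forall>vs. mcycle (f ` MV) (g ` ME) ends' vs \<longrightarrow> set vs \<inter> H \<noteq> {}"
    and c: "mcycle_with_edges MV ME ends vs es"
  shows "set vs \<inter> inv_into MV f ` H \<noteq> {}"
proof -
  have "mcycle (f ` MV) (g ` ME) ends' (map f vs)"
    using mcycle_with_edges_map[OF f g ends' c] mcycle_iff_mcycle_with_edges by blast
  then have "set (map f vs) \<inter> H \<noteq> {}" using hit by blast
  then obtain v where v: "v \<in> set vs" "f v \<in> H" by auto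
  moreover have "v \<in> MV" using c v unfolding mcycle_with_edges_def by auto
  ultimately have "v \<in> inv_into MV f ` H" using f by (metis imageI inv_into_f_f)
  then show ?thesis using v by blast
qed

lemma multigraph_image:
  assumes fin: "finite MV" "finite ME" and f: "inj_on f MV"
    and ends: "\<forall>e\<in>ME. ends e \<subseteq> MV \<and> 1 \<le> card (ends e) \<and> card (ends e) \<le> 2"
    and ends': "\<forall>e\<in>ME. ends' (g e) = f ` ends e"
  shows "multigraph (f ` MV) (g ` ME) ends'"
  unfolding multigraph_def
proof (intro conjI ballI)
  fix k assume "k \<in> g ` ME"
  then obtain e where e: "e \<in> ME" "k = g e" by blast
  have "ends' k = f ` ends e" "ends e \<subseteq> MV" using ends' ends e by auto
  moreover from this have "card (ends' k) = card (ends e)" using card_image[OF inj_on_subset[OF f]] by simp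
  ultimately show "ends' k \<subseteq> f ` MV" "1 \<le> card (ends' k)" "card (ends' k) \<le> 2"
    using ends e by auto
qed (use fin in auto)

lemma EP_bound_hitting_set:
  fixes MV :: "'v set" and ME :: "'e set"
  assumes EP: "EP_bound s phi" and fin: "finite MV" "finite ME"
    and ends: "\<forall>e\<in>ME. ends e \<subseteq> MV \<and> 1 \<le> card (ends e) \<and> card (ends e) \<le> 2"
    and nd: "\<not> has_disjoint_mcycles s MV ME ends"
  shows "\<exists>H\<subseteq>MV. card H \<le> phi \<and> (\<forall>vs es. mcycle_with_edges MV ME ends vs es \<longrightarrow> set vs \<inter> H \<noteq> {})"
proof -
  (* EP_bound only speaks about multigraphs labelled by naturals: relabel along injections into nat. *)
  obtain f :: "'v \<Rightarrow> nat" where f: "inj_on f MV" using finite_imp_inj_to_nat_seg[OF fin(1)] by blast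
  obtain g :: "'e \<Rightarrow> nat" where g: "inj_on g ME" using finite_imp_inj_to_nat_seg[OF fin(2)] by blast
  define ends' where "ends' = (\<lambda>k. f ` ends (inv_into ME g k))"
  have ends': "\<forall>e\<in>ME. ends' (g e) = f ` ends e" using g unfolding ends'_def by simp
  have mg: "multigraph (f ` MV) (g ` ME) ends'" using multigraph_image[OF fin f ends ends'] .
  have nd': "\<not> has_disjoint_mcycles s (f ` MV) (g ` ME) ends'"
    using has_disjoint_mcycles_preimage[OF f g _ ends'] ends nd by blast
  obtain H where H: "H \<subseteq> f ` MV" "card H \<le> phi"
    and hit: "\<forall>vs. mcycle (f ` MV) (g ` ME) ends' vs \<longrightarrow> set vs \<inter> H \<noteq> {}"
    using EP[unfolded EP_bound_def, rule_format, OF mg nd'[unfolded has_disjoint_mcycles_iff]] by blast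
  have "inv_into MV f ` H \<subseteq> MV" using H(1) f by auto
  moreover have "card (inv_into MV f ` H) \<le> phi"
    using H fin(1) card_image_le[of H "inv_into MV f"] finite_subset[of H "f ` MV"] by simp
  ultimately show ?thesis using mcycle_hitting_set_preimage[OF f g ends' hit] by blast
qed

definition interleave :: "'a list \<Rightarrow> 'a list \<Rightarrow> 'a list" where
  "interleave vs es = map (\<lambda>m. if even m then vs ! (m div 2) else es ! (m div 2)) [0..<2 * length vs]"

lemma length_interleave [simp]: "length (interleave vs es) = 2 * length vs"
  by (simp add: interleave_def)

lemma nth_interleave:
  "m < 2 * length vs \<Longrightarrow> interleave vs es ! m = (if even m then vs ! (m div 2) else es ! (m div 2))"
  by (simp add: interleave_def)

lemma interleave_nth_even: "i < length vs \<Longrightarrow> interleave vs es ! (2 * i) = vs ! i"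
  by (simp add: nth_interleave)

lemma interleave_nth_odd: "i < length vs \<Longrightarrow> interleave vs es ! (2 * i + 1) = es ! i"
  by (simp add: nth_interleave)

lemma set_interleave:
  assumes "length es = length vs"
  shows "set (interleave vs es) = set vs \<union> set es"
proof
  show "set (interleave vs es) \<subseteq> set vs \<union> set es"
    using assms by (auto simp: interleave_def)
next
  have "vs ! i \<in> set (interleave vs es) \<and> es ! i \<in> set (interleave vs es)" if i: "i < length vs" for i
  proof -
    have "2 * i < length (interleave vs es)" "2 * i + 1 < length (interleave vs es)" using i by auto
    then show ?thesis using interleave_nth_even[OF i] interleave_nth_odd[OF i] by (metis nth_mem)
  qed
  then show "set vs \<union> set es \<subseteq> set (interleave vs es)"
    using assms by (auto simp: in_set_conv_nth)
qed

lemma distinct_interleave: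
  assumes dv: "distinct vs" and de: "distinct es" and le: "length es = length vs"
    and disj: "set vs \<inter> set es = {}"
  shows "distinct (interleave vs es)"
proof -
  have "inj_on (\<lambda>m. if even m then vs ! (m div 2) else es ! (m div 2)) {0..<2 * length vs}"
  proof (rule inj_onI)
    fix m m' assume m: "m \<in> {0..<2 * length vs}" "m' \<in> {0..<2 * length vs}"
      and eq: "(if even m then vs ! (m div 2) else es ! (m div 2)) =
               (if even m' then vs ! (m' div 2) else es ! (m' div 2))"
    have a: "m div 2 < length vs" "m' div 2 < length vs" using m by auto
    show "m = m'"
    proof (cases "even m"; cases "even m'")
      assume "even m" "even m'"
      then have "m div 2 = m' div 2" using eq nth_eq_iff_index_eq[OF dv] a by auto
      then show ?thesis using \<open>even m\<close> \<open>even m'\<close> by (metis dvd_mult_div_cancel)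
    next
      assume "odd m" "odd m'"
      then have "m div 2 = m' div 2" using eq nth_eq_iff_index_eq[OF de] a le by auto
      then show ?thesis using \<open>odd m\<close> \<open>odd m'\<close> by (metis odd_two_times_div_two_succ)
    next
      assume "even m" "odd m'"
      then show ?thesis using eq a le disj by (metis disjoint_iff nth_mem)
    next
      assume "odd m" "even m'"
      then show ?thesis using eq a le disj by (metis disjoint_iff nth_mem)
    qed
  qed
  then show ?thesis unfolding interleave_def by (simp add: distinct_map)
qed

lemma interleave_consecutive_in:
  assumes k: "0 < length vs" and m: "m < 2 * length vs"
    and R: "\<And>i. i < length vs \<Longrightarrow> R (vs ! i) (es ! i) \<and> R (es ! i) (vs ! ((i + 1) mod length vs))"
  shows "R (interleave vs es ! m) (interleave vs es ! ((m + 1) mod (2 * length vs)))"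
proof (cases "even m")
  case True
  then obtain i where i: "m = 2 * i" "i < length vs" using m by auto
  then have "(m + 1) mod (2 * length vs) = 2 * i + 1" using m by simp
  moreover have "interleave vs es ! m = vs ! i" "interleave vs es ! (2 * i + 1) = es ! i"
    using i interleave_nth_even[of i vs es] interleave_nth_odd[of i vs es] by auto
  ultimately show ?thesis using R[OF i(2)] by simp
next
  case False
  then obtain i where "m = 2 * i + 1" by (rule oddE)
  with m have i: "m = 2 * i + 1" "i < length vs" by auto
  have "(m + 1) mod (2 * length vs) = 2 * ((i + 1) mod length vs)" using i by (simp add: mult_mod_right)
  moreover have lt: "(i + 1) mod length vs < length vs" using k by simp
  moreover have "interleave vs es ! m = es ! i"
    "interleave vs es ! (2 * ((i + 1) mod length vs)) = vs ! ((i + 1) mod length vs)"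
    using i lt interleave_nth_odd[of i vs es] interleave_nth_even[of "(i + 1) mod length vs" vs es] by auto
  ultimately show ?thesis using R[OF i(2)] by simp
qed

lemma is_cycle_interleave:
  assumes ZV: "Z \<subseteq> V" and BV: "Bs \<subseteq> V - Z" and two: "\<forall>b\<in>Bs. card (nbrs E b \<inter> Z) = 2"
    and c: "mcycle_with_edges Z Bs (\<lambda>b. nbrs E b \<inter> Z) vs es"
  shows "is_cycle V E (interleave vs es)"
proof -
  define k where "k = length vs"
  have k1: "k \<ge> 1" and le: "length es = k" and sv: "set vs \<subseteq> Z" and se: "set es \<subseteq> Bs"
    and ee: "\<forall>i < k. nbrs E (es ! i) \<inter> Z = {vs ! i, vs ! ((i + 1) mod k)}"
    using c unfolding mcycle_with_edges_def k_def by auto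
  have "k \<noteq> 1"
  proof
    assume "k = 1"
    then have "nbrs E (es ! 0) \<inter> Z = {vs ! 0}" "es ! 0 \<in> Bs" using ee se le by auto
    then show False using two by fastforce
  qed
  then have k2: "k \<ge> 2" using k1 by simp
  have edges: "{vs ! i, es ! i} \<in> E \<and> {es ! i, vs ! ((i + 1) mod k)} \<in> E" if "i < k" for i
  proof -
    have "vs ! i \<in> nbrs E (es ! i)" "vs ! ((i + 1) mod k) \<in> nbrs E (es ! i)" using ee that by blast+
    then show ?thesis by (simp add: nbrs_def insert_commute)
  qed
  have "0 < length vs" using k1 k_def by linarith
  then have "{interleave vs es ! m, interleave vs es ! ((m + 1) mod (2 * k))} \<in> E" if "m < 2 * k" for m
    using interleave_consecutive_in[of vs m "\<lambda>u w. {u, w} \<in> E" es] edges that unfolding k_def by blast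
  moreover have "distinct (interleave vs es)"
    using c BV sv se le k_def unfolding mcycle_with_edges_def by (intro distinct_interleave) auto
  moreover have "set (interleave vs es) \<subseteq> V" using set_interleave[of es vs] le k_def sv se ZV BV by auto
  ultimately show ?thesis unfolding is_cycle_def using k2 k_def by auto
qed

lemma lifted_mcycles_disjoint:
  assumes BZ: "Bs \<inter> Z = {}" and two: "\<forall>b\<in>Bs. card (nbrs E b \<inter> Z) = 2"
    and c1: "mcycle_with_edges Z Bs (\<lambda>b. nbrs E b \<inter> Z) vs1 es1"
    and c2: "mcycle_with_edges Z Bs (\<lambda>b. nbrs E b \<inter> Z) vs2 es2"
    and disj: "set vs1 \<inter> set vs2 = {}"
  shows "(set vs1 \<union> set es1) \<inter> (set vs2 \<union> set es2) = {}"
proof -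
  have s1: "set vs1 \<subseteq> Z" "set es1 \<subseteq> Bs" and s2: "set vs2 \<subseteq> Z" "set es2 \<subseteq> Bs"
    using c1 c2 unfolding mcycle_with_edges_def by auto
  have "set es1 \<inter> set es2 = {}"
  proof (rule ccontr)
    assume "set es1 \<inter> set es2 \<noteq> {}"
    then obtain b where b: "b \<in> set es1" "b \<in> set es2" by blast
    then have "nbrs E b \<inter> Z \<subseteq> set vs1 \<inter> set vs2"
      using mcycle_with_edges_ends_subset[OF c1] mcycle_with_edges_ends_subset[OF c2] by blast
    moreover have "nbrs E b \<inter> Z \<noteq> {}" using two b(1) s1 by fastforce
    ultimately show False using disj by blast
  qed
  then show ?thesis using s1 s2 BZ disj by blast
qed

lemma lifted_mcycles_nonadjacent:
  assumes BZ: "Bs \<inter> Z = {}" and stZ: "stable E Z" and stB: "stable E Bs"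
    and c1: "mcycle_with_edges Z Bs (\<lambda>b. nbrs E b \<inter> Z) vs1 es1"
    and c2: "mcycle_with_edges Z Bs (\<lambda>b. nbrs E b \<inter> Z) vs2 es2"
    and disj: "set vs1 \<inter> set vs2 = {}"
    and u: "u \<in> set vs1 \<union> set es1" and w: "w \<in> set vs2 \<union> set es2"
  shows "{u, w} \<notin> E"
proof
  assume uw: "{u, w} \<in> E"
  have s1: "set vs1 \<subseteq> Z" "set es1 \<subseteq> Bs" and s2: "set vs2 \<subseteq> Z" "set es2 \<subseteq> Bs"
    using c1 c2 unfolding mcycle_with_edges_def by auto
  consider "u \<in> Z" "w \<in> Z" | "u \<in> Z" "w \<notin> Z" | "u \<notin> Z" "w \<in> Z" | "u \<notin> Z" "w \<notin> Z" by blast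
  then show False
  proof cases
    case 1
    then show False using stZ uw unfolding stable_def by blast
  next
    case 2
    then have "u \<in> set vs1" "w \<in> set es2" "u \<in> nbrs E w \<inter> Z"
      using u w s1 s2 BZ uw by (auto simp: nbrs_def)
    then show False using mcycle_with_edges_ends_subset[OF c2] disj by blast
  next
    case 3
    then have "w \<in> set vs2" "u \<in> set es1" "w \<in> nbrs E u \<inter> Z"
      using u w s1 s2 BZ uw by (auto simp: nbrs_def insert_commute)
    then show False using mcycle_with_edges_ends_subset[OF c1] disj by blast
  next
    case 4
    then have "u \<in> Bs" "w \<in> Bs" using u w s1 s2 by auto
    then show False using stB uw unfolding stable_def by blast
  qed
qed

lemma anticomplete_lifted_mcycles:
  assumes BZ: "Bs \<inter> Z = {}" and two: "\<forall>b\<in>Bs. card (nbrs E b \<inter> Z) = 2"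
    and stZ: "stable E Z" and stB: "stable E Bs"
    and c1: "mcycle_with_edges Z Bs (\<lambda>b. nbrs E b \<inter> Z) vs1 es1"
    and c2: "mcycle_with_edges Z Bs (\<lambda>b. nbrs E b \<inter> Z) vs2 es2"
    and disj: "set vs1 \<inter> set vs2 = {}"
  shows "anticomplete E (set vs1 \<union> set es1) (set vs2 \<union> set es2)"
  unfolding anticomplete_def
  using lifted_mcycles_disjoint[OF BZ two c1 c2 disj] lifted_mcycles_nonadjacent[OF BZ stZ stB c1 c2 disj]
  by blast

lemma sO_free_no_disjoint_lifted_mcycles:
  assumes so: "sO_free s V E" and ZV: "Z \<subseteq> V" and BV: "Bs \<subseteq> V - Z"
    and two: "\<forall>b\<in>Bs. card (nbrs E b \<inter> Z) = 2" and stZ: "stable E Z" and stB: "stable E Bs"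
  shows "\<not> has_disjoint_mcycles s Z Bs (\<lambda>b. nbrs E b \<inter> Z)"
proof
  assume "has_disjoint_mcycles s Z Bs (\<lambda>b. nbrs E b \<inter> Z)"
  then obtain cs where l: "length cs = s"
    and cyc: "\<forall>i < s. \<exists>es. mcycle_with_edges Z Bs (\<lambda>b. nbrs E b \<inter> Z) (cs ! i) es"
    and dj: "\<forall>i < s. \<forall>j < s. i \<noteq> j \<longrightarrow> set (cs ! i) \<inter> set (cs ! j) = {}"
    unfolding has_disjoint_mcycles_def by blast
  obtain es where es: "\<forall>i < s. mcycle_with_edges Z Bs (\<lambda>b. nbrs E b \<inter> Z) (cs ! i) (es i)"
    using cyc by metis
  define gs where "gs = map (\<lambda>i. interleave (cs ! i) (es i)) [0..<s]"
  have gs_nth: "gs ! i = interleave (cs ! i) (es i)" "set (gs ! i) = set (cs ! i) \<union> set (es i)"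
    if "i < s" for i
  proof -
    have "length (es i) = length (cs ! i)" using that es unfolding mcycle_with_edges_def by blast
    then show "gs ! i = interleave (cs ! i) (es i)" "set (gs ! i) = set (cs ! i) \<union> set (es i)"
      using that set_interleave unfolding gs_def by auto
  qed
  have BZ: "Bs \<inter> Z = {}" using BV by blast
  have "length gs = s" unfolding gs_def by simp
  moreover have "\<forall>i < s. is_cycle V E (gs ! i)"
    using is_cycle_interleave[OF ZV BV two] es gs_nth by auto
  moreover have "\<forall>i < s. \<forall>j < s. i \<noteq> j \<longrightarrow> anticomplete E (set (gs ! i)) (set (gs ! j))"
    using anticomplete_lifted_mcycles[OF BZ two stZ stB] es dj gs_nth by simp
  ultimately show False using so unfolding sO_free_def by blast
qed

definition exploded_vertices :: "'a set \<Rightarrow> 'a set set \<Rightarrow> 'a set \<Rightarrow> 'a set \<Rightarrow> 'a set" where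
  "exploded_vertices V E Z X = X \<union> {u \<in> V - Z. \<exists>x\<in>X. {u, x} \<in> E}"

lemma explode_eq:
  "explode x ((V, E), Z) = ((V - exploded_vertices V E Z {x}, {e \<in> E. e \<inter> exploded_vertices V E Z {x} = {}}), Z - {x})"
proof -
  have D: "{x} \<union> (nbrs E x \<inter> (V - Z)) = exploded_vertices V E Z {x}"
    unfolding exploded_vertices_def nbrs_def by (auto simp: insert_commute)
  show ?thesis unfolding explode_def del_vertices_def D[symmetric] by simp
qed

lemma exploded_vertices_insert:
  fixes V :: "'a set" and E :: "'a set set"
  assumes "x \<in> Z" "x \<notin> X" "X \<subseteq> Z"
  defines "D \<equiv> exploded_vertices V E Z {x}"
  shows "exploded_vertices V E Z (insert x X) =
    D \<union> exploded_vertices (V - D) {e \<in> E. e \<inter> D = {}} (Z - {x}) X"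
  using assms unfolding D_def exploded_vertices_def by auto

lemma explode_list_eq:
  assumes "distinct xs" "set xs \<subseteq> Z"
  shows "explode_list xs ((V, E), Z) =
    ((V - exploded_vertices V E Z (set xs), {e \<in> E. e \<inter> exploded_vertices V E Z (set xs) = {}}), Z - set xs)"
  using assms
proof (induction xs arbitrary: V E Z)
  case Nil
  then show ?case by (simp add: explode_list_def exploded_vertices_def)
next
  case (Cons x xs)
  define D where "D = exploded_vertices V E Z {x}"
  have sub: "set xs \<subseteq> Z - {x}" "distinct xs" using Cons.prems by auto
  have "explode_list (x # xs) ((V, E), Z) = explode_list xs ((V - D, {e \<in> E. e \<inter> D = {}}), Z - {x})"
    unfolding explode_list_def D_def by (simp add: explode_eq)
  also have "\<dots> = ((V - D - exploded_vertices (V - D) {e \<in> E. e \<inter> D = {}} (Z - {x}) (set xs),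
      {e \<in> E. e \<inter> D = {} \<and> e \<inter> exploded_vertices (V - D) {e \<in> E. e \<inter> D = {}} (Z - {x}) (set xs) = {}}),
      Z - {x} - set xs)"
    using Cons.IH[where Z = "Z - {x}"] sub by simp
  also have "\<dots> = ((V - exploded_vertices V E Z (set (x # xs)),
      {e \<in> E. e \<inter> exploded_vertices V E Z (set (x # xs)) = {}}), Z - set (x # xs))"
    using exploded_vertices_insert[of x Z "set xs" V E] Cons.prems unfolding D_def by auto
  finally show ?case .
qed

lemma graph_induced:
  assumes "graph V E"
  shows "graph (V - D) {e \<in> E. e \<inter> D = {}}"
  unfolding graph_def
proof (intro conjI ballI)
  show "finite (V - D)" using assms unfolding graph_def by simp
next
  fix e assume e: "e \<in> {e \<in> E. e \<inter> D = {}}"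
  then have "e \<in> E" "e \<inter> D = {}" by auto
  moreover have "\<forall>e\<in>E. \<exists>u v. u \<noteq> v \<and> u \<in> V \<and> v \<in> V \<and> e = {u, v}"
    using assms unfolding graph_def by (rule conjunct2)
  ultimately obtain u v where "u \<noteq> v" "u \<in> V" "v \<in> V" "e = {u, v}" "e \<inter> D = {}" by blast
  then show "\<exists>u v. u \<noteq> v \<and> u \<in> V - D \<and> v \<in> V - D \<and> e = {u, v}" by auto
qed

lemma is_cycle_induced: "is_cycle (V - D) {e \<in> E. e \<inter> D = {}} vs \<Longrightarrow> is_cycle V E vs"
  unfolding is_cycle_def by blast

lemma sO_free_induced:
  assumes "sO_free s V E"
  shows "sO_free s (V - D) {e \<in> E. e \<inter> D = {}}"
  unfolding sO_free_def
proof
  let ?E' = "{e \<in> E. e \<inter> D = {}}"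
  assume "\<exists>cs. length cs = s \<and> (\<forall>i < s. is_cycle (V - D) ?E' (cs ! i)) \<and>
    (\<forall>i < s. \<forall>j < s. i \<noteq> j \<longrightarrow> anticomplete ?E' (set (cs ! i)) (set (cs ! j)))"
  then obtain cs where cs: "length cs = s" "\<forall>i < s. is_cycle (V - D) ?E' (cs ! i)"
    "\<forall>i < s. \<forall>j < s. i \<noteq> j \<longrightarrow> anticomplete ?E' (set (cs ! i)) (set (cs ! j))" by blast
  have "anticomplete E (set (cs ! i)) (set (cs ! j))" if "i < s" "j < s" "i \<noteq> j" for i j
  proof -
    have "set (cs ! i) \<inter> D = {}" "set (cs ! j) \<inter> D = {}"
      using cs(2) that unfolding is_cycle_def by auto
    then show ?thesis using cs(3) that unfolding anticomplete_def by blast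
  qed
  then show False using assms cs is_cycle_induced unfolding sO_free_def by blast
qed

lemma nbrs_induced: "v \<notin> D \<Longrightarrow> nbrs {e \<in> E. e \<inter> D = {}} v = nbrs E v - D"
  unfolding nbrs_def by auto

lemma dyadicD:
  assumes "dyadic s V E Z"
  shows "graph V E" "sO_free s V E" "cycle_hitting V E Z" "stable E Z"
    "\<forall>v \<in> V - Z. card (nbrs E v \<inter> Z) \<le> 2" "finite V" "Z \<subseteq> V" "finite Z"
proof -
  show g: "graph V E" "sO_free s V E" and ch: "cycle_hitting V E Z" and "stable E Z"
    "\<forall>v \<in> V - Z. card (nbrs E v \<inter> Z) \<le> 2"
    using assms unfolding dyadic_def plantation_def by simp_all
  show "finite V" using g unfolding graph_def by simp
  moreover show "Z \<subseteq> V" using ch unfolding cycle_hitting_def by simp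
  ultimately show "finite Z" by (rule finite_subset[rotated])
qed

lemma dyadic_explode_list:
  assumes dy: "dyadic s V E Z" and xs: "distinct xs" "set xs \<subseteq> Z"
    and res: "explode_list xs ((V, E), Z) = ((V', E'), Z')"
  shows "dyadic s V' E' Z' \<and> binary_vertices V' E' Z' \<subseteq> {b \<in> binary_vertices V E Z. nbrs E b \<inter> set xs = {}}"
proof -
  define X where "X = set xs"
  define D where "D = exploded_vertices V E Z X"
  have V': "V' = V - D" and E': "E' = {e \<in> E. e \<inter> D = {}}" and Z': "Z' = Z - X"
    using res explode_list_eq[OF xs] unfolding D_def X_def by auto
  have DZ: "D \<inter> Z \<subseteq> X" unfolding D_def exploded_vertices_def by auto
  have key: "v \<in> V - Z \<and> nbrs E v \<inter> X = {} \<and> nbrs E' v \<inter> Z' = nbrs E v \<inter> Z" if v: "v \<in> V' - Z'" for v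
  proof -
    have "v \<in> V" "v \<notin> D" using v V' by auto
    moreover from this have "v \<notin> Z" using v Z' unfolding D_def exploded_vertices_def by auto
    moreover have "nbrs E v \<inter> X = {}"
      using \<open>v \<in> V\<close> \<open>v \<notin> D\<close> \<open>v \<notin> Z\<close> unfolding D_def exploded_vertices_def nbrs_def
      by (auto simp: insert_commute)
    ultimately show ?thesis using DZ unfolding E' Z' nbrs_induced[OF \<open>v \<notin> D\<close>] by auto
  qed
  have "graph V' E'" using graph_induced[OF dyadicD(1)[OF dy]] V' E' by simp
  moreover have "sO_free s V' E'" using sO_free_induced[OF dyadicD(2)[OF dy]] V' E' by simp
  moreover have "cycle_hitting V' E' Z'"
    unfolding cycle_hitting_def
  proof (intro conjI allI impI)
    show "Z' \<subseteq> V'" using dyadicD(7)[OF dy] DZ unfolding V' Z' by auto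
  next
    fix vs assume c: "is_cycle V' E' vs"
    then obtain z where "z \<in> set vs" "z \<in> Z"
      using is_cycle_induced dyadicD(3)[OF dy] unfolding V' E' cycle_hitting_def by blast
    moreover have "z \<notin> D" using c \<open>z \<in> set vs\<close> unfolding is_cycle_def V' by auto
    ultimately show "set vs \<inter> Z' \<noteq> {}" unfolding Z' D_def exploded_vertices_def by auto
  qed
  moreover have "stable E' Z'" using dyadicD(4)[OF dy] unfolding stable_def E' Z' by blast
  moreover have "\<forall>v \<in> V' - Z'. card (nbrs E' v \<inter> Z') \<le> 2" using key dyadicD(5)[OF dy] by auto
  moreover have "binary_vertices V' E' Z' \<subseteq> {b \<in> binary_vertices V E Z. nbrs E b \<inter> X = {}}"
    using key unfolding binary_vertices_def by auto
  ultimately show ?thesis unfolding dyadic_def plantation_def X_def by blast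
qed

lemma binary_vertices_split_stable:
  assumes "dyadic s V E Z"
  shows "\<exists>B1 \<subseteq> binary_vertices V E Z. stable E B1 \<and> stable E (binary_vertices V E Z - B1)"
proof (rule acyclic_set_splits_into_two_stable)
  show "graph V E" using dyadicD(1)[OF assms] .
  show "binary_vertices V E Z \<subseteq> V" unfolding binary_vertices_def by blast
  show "\<forall>vs. is_cycle V E vs \<longrightarrow> \<not> set vs \<subseteq> binary_vertices V E Z"
    using dyadicD(3)[OF assms] unfolding cycle_hitting_def binary_vertices_def by blast
qed

lemma binary_mcycles_hitting_set:
  assumes EP: "EP_bound s phi" and dy: "dyadic s V E Z"
    and Bs: "Bs \<subseteq> binary_vertices V E Z" "stable E Bs"
  shows "\<exists>X\<subseteq>Z. card X \<le> phi \<and>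
    (\<forall>vs es. mcycle_with_edges Z Bs (\<lambda>b. nbrs E b \<inter> Z) vs es \<longrightarrow> set vs \<inter> X \<noteq> {})"
proof (rule EP_bound_hitting_set[OF EP])
  have BV: "Bs \<subseteq> V - Z" and two: "\<forall>b\<in>Bs. card (nbrs E b \<inter> Z) = 2"
    using Bs(1) unfolding binary_vertices_def by auto
  show "finite Z" using dyadicD(8)[OF dy] .
  show "finite Bs" using dyadicD(6)[OF dy] BV finite_subset by blast
  show "\<forall>b\<in>Bs. nbrs E b \<inter> Z \<subseteq> Z \<and> 1 \<le> card (nbrs E b \<inter> Z) \<and> card (nbrs E b \<inter> Z) \<le> 2"
    using two by simp
  show "\<not> has_disjoint_mcycles s Z Bs (\<lambda>b. nbrs E b \<inter> Z)"
    using sO_free_no_disjoint_lifted_mcycles[OF dyadicD(2,7)[OF dy] BV two dyadicD(4)[OF dy] Bs(2)] .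
qed

lemma card_binary_avoiding_hitting_set_le:
  assumes fin: "finite V" "finite Z" and Bs: "Bs \<subseteq> binary_vertices V E Z" and X: "X \<subseteq> Z"
    and hit: "\<forall>vs es. mcycle_with_edges Z Bs (\<lambda>b. nbrs E b \<inter> Z) vs es \<longrightarrow> set vs \<inter> X \<noteq> {}"
  shows "card {b \<in> Bs. nbrs E b \<inter> X = {}} \<le> card Z"
proof -
  let ?C = "{b \<in> Bs. nbrs E b \<inter> X = {}}"
  have "finite ?C" using fin(1) Bs finite_subset unfolding binary_vertices_def by fastforce
  moreover have "\<forall>b\<in>?C. nbrs E b \<inter> Z \<subseteq> Z - X \<and> card (nbrs E b \<inter> Z) = 2"
    using Bs unfolding binary_vertices_def by auto
  moreover have "macyclic (Z - X) ?C (\<lambda>b. nbrs E b \<inter> Z)"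
    unfolding macyclic_def
  proof (intro allI notI)
    fix vs es assume c: "mcycle_with_edges (Z - X) ?C (\<lambda>b. nbrs E b \<inter> Z) vs es"
    then have "set vs \<inter> X \<noteq> {}" using hit mcycle_with_edges_mono[of "Z - X" ?C _ vs es Z Bs] by blast
    moreover have "set vs \<subseteq> Z - X" using c unfolding mcycle_with_edges_def by blast
    ultimately show False by blast
  qed
  ultimately have "card ?C \<le> card (Z - X)" using fin(2) by (intro macyclic_card_edges_le) auto
  also have "\<dots> \<le> card Z" using fin(2) by (simp add: card_mono)
  finally show ?thesis .
qed

lemma card_binary_avoiding_two_hitting_sets_le:
  assumes fin: "finite V" "finite Z" and B1: "B1 \<subseteq> binary_vertices V E Z" and X: "X1 \<subseteq> Z" "X2 \<subseteq> Z"
    and hit1: "\<forall>vs es. mcycle_with_edges Z B1 (\<lambda>b. nbrs E b \<inter> Z) vs es \<longrightarrow> set vs \<inter> X1 \<noteq> {}"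
    and hit2: "\<forall>vs es. mcycle_with_edges Z (binary_vertices V E Z - B1) (\<lambda>b. nbrs E b \<inter> Z) vs es \<longrightarrow>
      set vs \<inter> X2 \<noteq> {}"
  shows "card {b \<in> binary_vertices V E Z. nbrs E b \<inter> (X1 \<union> X2) = {}} \<le> 2 * card Z"
proof -
  let ?B = "binary_vertices V E Z"
  let ?C1 = "{b \<in> B1. nbrs E b \<inter> X1 = {}}" and ?C2 = "{b \<in> ?B - B1. nbrs E b \<inter> X2 = {}}"
  have "finite (?C1 \<union> ?C2)"
  proof (rule finite_subset)
    show "?C1 \<union> ?C2 \<subseteq> ?B" using B1 by blast
    show "finite ?B" using fin(1) unfolding binary_vertices_def by simp
  qed
  moreover have "{b \<in> ?B. nbrs E b \<inter> (X1 \<union> X2) = {}} \<subseteq> ?C1 \<union> ?C2" by blast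
  ultimately have "card {b \<in> ?B. nbrs E b \<inter> (X1 \<union> X2) = {}} \<le> card (?C1 \<union> ?C2)" by (rule card_mono)
  also have "\<dots> \<le> card ?C1 + card ?C2" by (rule card_Un_le)
  also have "\<dots> \<le> 2 * card Z"
    using card_binary_avoiding_hitting_set_le[OF fin B1 X(1) hit1]
      card_binary_avoiding_hitting_set_le[OF fin Diff_subset X(2) hit2] by simp
  finally show ?thesis .
qed

theorem mainTheorem14:
  fixes s :: nat and phi :: nat and V :: "'a set" and E :: "'a set set" and Z :: "'a set"
  assumes "s \<ge> 1"
    and "EP_bound s phi"
    and "dyadic s V E Z"
  shows "\<exists>xs. distinct xs \<and> set xs \<subseteq> Z \<and> card (set xs) \<le> 2 * phi \<and>
    (let ((V', E'), Z') = explode_list xs ((V, E), Z) in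
       dyadic s V' E' Z' \<and> card (binary_vertices V' E' Z') \<le> 2 * card Z)"
proof -
  let ?B = "binary_vertices V E Z"
  have fin: "finite V" "finite Z" using dyadicD(6,8)[OF assms(3)] .
  obtain B1 where B1: "B1 \<subseteq> ?B" "stable E B1" "stable E (?B - B1)"
    using binary_vertices_split_stable[OF assms(3)] by blast
  obtain X1 where X1: "X1 \<subseteq> Z" "card X1 \<le> phi"
      "\<forall>vs es. mcycle_with_edges Z B1 (\<lambda>b. nbrs E b \<inter> Z) vs es \<longrightarrow> set vs \<inter> X1 \<noteq> {}"
    using binary_mcycles_hitting_set[OF assms(2,3) B1(1,2)] by blast
  obtain X2 where X2: "X2 \<subseteq> Z" "card X2 \<le> phi"
      "\<forall>vs es. mcycle_with_edges Z (?B - B1) (\<lambda>b. nbrs E b \<inter> Z) vs es \<longrightarrow> set vs \<inter> X2 \<noteq> {}"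
    using binary_mcycles_hitting_set[OF assms(2,3) Diff_subset B1(3)] by blast
  have "finite (X1 \<union> X2)" using X1(1) X2(1) fin(2) finite_subset by blast
  from finite_distinct_list[OF this] obtain xs where xs: "set xs = X1 \<union> X2" "distinct xs" by (elim exE conjE)
  obtain V' E' Z' where res: "explode_list xs ((V, E), Z) = ((V', E'), Z')" by (metis prod.exhaust)
  have dy': "dyadic s V' E' Z'" and sub: "binary_vertices V' E' Z' \<subseteq> {b \<in> ?B. nbrs E b \<inter> (X1 \<union> X2) = {}}"
    using dyadic_explode_list[OF assms(3) xs(2) _ res] xs(1) X1(1) X2(1) by auto
  have "finite ?B" using fin(1) unfolding binary_vertices_def by simp
  then have "card (binary_vertices V' E' Z') \<le> card {b \<in> ?B. nbrs E b \<inter> (X1 \<union> X2) = {}}"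
    using sub by (intro card_mono) auto
  also have "\<dots> \<le> 2 * card Z"
    using card_binary_avoiding_two_hitting_sets_le[OF fin B1(1) X1(1) X2(1) X1(3) X2(3)] .
  finally have "card (binary_vertices V' E' Z') \<le> 2 * card Z" .
  moreover have "card (set xs) \<le> 2 * phi" using xs(1) X1(2) X2(2) card_Un_le[of X1 X2] by simp
  ultimately show ?thesis using xs X1(1) X2(1) dy' by (intro exI[of _ xs]) (auto simp: res)
qed

end
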